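(* Let $\mu$ be a positive Borel measure on $\mathbb{R}^d$ such that $\mu(B)>0$ for every ball $B\subset\mathbb{R}^d$. Let $\Omega\subset\mathbb{R}^d$ be a bounded domain, $r:\Omega\to(0,+\infty)$ an admissible radius function in $\Omega$, and $0\leq\alpha<1$. Suppose $u,v\in C(\overline{\Omega})$ satisfy $T_\alpha u=u$ and $T_\alpha v=v$ in $\Omega$, and $u\leq v$ on $\partial\Omega$. Then $u\leq v$ in $\Omega$.
   Context: An admissible radius function in $\Omega$ is $r:\Omega\to(0,\infty)$ with $0<r(x)\leq\operatorname{dist}(x,\partial\Omega)$; $B_x=B(x,r(x))$ (open ball). For $x\in\Omega$: $Su(x)=\frac12(\sup_{B_x}u+\inf_{B_x}u)$, $Mu(x)=\frac{1}{\mu(B_x)}\int_{B_x}u\,d\mu$ (the measure $\mu$ is implicitly assumed finite on balls so that these averages are defined), and $T_\alpha=\alpha S+(1-\alpha)M$. *)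

theory Defs
  imports "HOL-Analysis.Analysis"
begin

definition admissible_radius :: "'a::euclidean_space set \<Rightarrow> ('a \<Rightarrow> real) \<Rightarrow> bool" where
  "admissible_radius \<Omega> r \<longleftrightarrow> (\<forall>x\<in>\<Omega>. 0 < r x \<and> r x \<le> infdist x (frontier \<Omega>))"

definition S_op :: "('a::euclidean_space \<Rightarrow> real) \<Rightarrow> ('a \<Rightarrow> real) \<Rightarrow> 'a \<Rightarrow> real" where
  "S_op r u x = (Sup (u ` ball x (r x)) + Inf (u ` ball x (r x))) / 2"

definition M_op :: "'a::euclidean_space measure \<Rightarrow> ('a \<Rightarrow> real) \<Rightarrow> ('a \<Rightarrow> real) \<Rightarrow> 'a \<Rightarrow> real" where
  "M_op \<mu> r u x = (LINT y:ball x (r x)|\<mu>. u y) / measure \<mu> (ball x (r x))"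

definition T_op :: "real \<Rightarrow> 'a::euclidean_space measure \<Rightarrow> ('a \<Rightarrow> real) \<Rightarrow> ('a \<Rightarrow> real) \<Rightarrow> 'a \<Rightarrow> real" where
  "T_op \<alpha> \<mu> r u x = \<alpha> * S_op r u x + (1 - \<alpha>) * M_op \<mu> r u x"

end

theory Submission imports Defs begin

text \<open>
  Let \<open>w = u - v\<close> and suppose its maximum \<open>m\<close> over the compact set \<open>closure \<Omega>\<close> is
  positive; by the boundary condition it is attained in \<open>\<Omega>\<close>. At a maximum point \<open>x\<close> the
  fixed point equations give \<open>m = w x \<le> \<alpha> m + (1 - \<alpha>) M w x\<close>, since \<open>S u x - S v x \<le> m\<close>.
  As \<open>\<alpha> < 1\<close>, the \<open>\<mu>\<close>-average of the continuous function \<open>w \<le> m\<close> over \<open>B\<^sub>x\<close> is at least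
  \<open>m\<close>, and because \<open>\<mu>\<close> charges every ball this forces \<open>w = m\<close> on \<open>B\<^sub>x\<close>. So the maximum set
  is open in the connected set \<open>\<Omega>\<close>, hence all of \<open>\<Omega>\<close>, and by continuity \<open>w = m > 0\<close> on
  the (nonempty) frontier, contradicting \<open>u \<le> v\<close> there.
\<close>

lemma ball_subset_if_le_infdist_frontier:
  fixes S :: "'a::euclidean_space set"
  assumes "x \<in> S" "e \<le> infdist x (frontier S)"
  shows "ball x e \<subseteq> S"
proof
  fix y assume y: "y \<in> ball x e"
  show "y \<in> S"
  proof (rule ccontr)
    assume "y \<notin> S"
    then have "closed_segment x y \<inter> frontier S \<noteq> {}"
      using assms(1) by (intro connected_Int_frontier) auto
    then obtain z where z: "z \<in> closed_segment x y" "z \<in> frontier S" by auto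
    have "infdist x (frontier S) \<le> dist x z" using infdist_le[OF z(2)] .
    also have "\<dots> \<le> dist x y" using dist_in_closed_segment[OF z(1)] by (simp add: dist_commute)
    finally show False using y assms(2) by simp
  qed
qed

lemma set_integrable_bounded_continuous_on:
  fixes f :: "'a::euclidean_space \<Rightarrow> real"
  assumes "sets \<mu> = sets borel" "open B" "emeasure \<mu> B < \<infinity>"
    and "continuous_on B f" "bounded (f ` B)"
  shows "set_integrable \<mu> B f"
proof -
  obtain K where K: "\<And>y. y \<in> B \<Longrightarrow> \<bar>f y\<bar> \<le> K"
    using assms(5) by (auto simp: bounded_iff)
  have "B \<in> sets \<mu>" using assms(1,2) by auto
  then have "integrable \<mu> (\<lambda>x. K * indicator B x)"
    using assms(3) by (intro integrable_mult_right) (auto simp: less_top)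
  moreover have "(\<lambda>x. indicator B x *\<^sub>R f x) \<in> borel_measurable \<mu>"
    using borel_measurable_continuous_on_indicator[OF borel_open[OF assms(2)] assms(4)]
    by (simp add: measurable_cong_sets[OF assms(1) refl])
  ultimately show ?thesis
    unfolding set_integrable_def
    by (rule Bochner_Integration.integrable_bound)
       (use K in \<open>auto simp: indicator_def intro!: AE_I2 order_trans[OF _ abs_ge_self]\<close>)
qed

text \<open>Otherwise \<open>w\<close> stays below \<open>M\<close> on a ball, which has positive measure.\<close>

lemma continuous_eq_bound_if_set_integral_ge:
  fixes w :: "'a::euclidean_space \<Rightarrow> real"
  assumes sets: "sets \<mu> = sets borel" and B: "open B" and fin: "emeasure \<mu> B < \<infinity>"
    and pos: "\<And>x e. 0 < e \<Longrightarrow> 0 < emeasure \<mu> (ball x e)"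
    and cont: "continuous_on B w" and int: "set_integrable \<mu> B w"
    and le: "\<And>y. y \<in> B \<Longrightarrow> w y \<le> M"
    and ge: "M * measure \<mu> B \<le> (LINT y:B|\<mu>. w y)"
    and y: "y \<in> B"
  shows "w y = M"
proof (rule ccontr)
  assume "w y \<noteq> M"
  then have "y \<in> B \<inter> w -` {..<M}" using le y by force
  moreover have "open (B \<inter> w -` {..<M})"
    using continuous_open_preimage[OF cont B] by auto
  ultimately obtain e where e: "e > 0" "ball y e \<subseteq> B \<inter> w -` {..<M}"
    using open_contains_ball by blast
  have Bs: "B \<in> sets \<mu>" using sets B by auto
  have int_const: "set_integrable \<mu> B (\<lambda>y. M)"
    using fin Bs unfolding set_integrable_def by (simp add: less_top mult.commute[of _ M])
  have int_diff: "set_integrable \<mu> B (\<lambda>y. M - w y)"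
    using set_integral_diff(1)[OF int_const int] .
  have nonneg: "AE x in \<mu>. 0 \<le> indicator B x *\<^sub>R (M - w x)"
    using le by (intro AE_I2) (auto simp: indicator_def)
  have "(LINT y:B|\<mu>. M - w y) = measure \<mu> B * M - (LINT y:B|\<mu>. w y)"
    using set_integral_diff(2)[OF int_const int] set_integral_const[OF Bs, of M] fin
    by (auto simp: less_top)
  also have "\<dots> \<le> 0" using ge by (simp add: mult.commute)
  finally have "(LINT y:B|\<mu>. M - w y) = 0"
    using nonneg unfolding set_lebesgue_integral_def
    by (intro antisym integral_nonneg_AE) auto
  then have "AE x in \<mu>. indicator B x *\<^sub>R (M - w x) = 0"
    using integral_nonneg_eq_0_iff_AE[OF int_diff[unfolded set_integrable_def] nonneg]
    unfolding set_lebesgue_integral_def by auto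
  then obtain N where N: "{x \<in> space \<mu>. indicator B x *\<^sub>R (M - w x) \<noteq> 0} \<subseteq> N"
    "emeasure \<mu> N = 0" "N \<in> sets \<mu>" by (rule AE_E)
  have "ball y e \<subseteq> N"
    using e N(1) sets_eq_imp_space_eq[OF sets] by (auto simp: indicator_def)
  then have "emeasure \<mu> (ball y e) \<le> emeasure \<mu> N" using N(3) by (intro emeasure_mono)
  with N(2) pos[OF e(1), of y] show False by simp
qed

lemma S_op_diff_le:
  assumes "ball x (r x) \<noteq> {}"
    and "bounded (u ` ball x (r x))" "bounded (v ` ball x (r x))"
    and "\<And>y. y \<in> ball x (r x) \<Longrightarrow> u y - v y \<le> M"
  shows "S_op r u x - S_op r v x \<le> M"
proof -
  define B where "B = ball x (r x)"
  note bdd = bounded_imp_bdd_above bounded_imp_bdd_below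
  have "Sup (u ` B) \<le> Sup (v ` B) + M"
  proof (rule cSup_least)
    fix t assume "t \<in> u ` B"
    then obtain y where "y \<in> B" "t = u y" by auto
    then show "t \<le> Sup (v ` B) + M"
      using assms(3,4) cSup_upper[of "v y" "v ` B"] bdd unfolding B_def by fastforce
  qed (use assms(1) B_def in auto)
  moreover have "Inf (u ` B) - M \<le> Inf (v ` B)"
  proof (rule cInf_greatest)
    fix t assume "t \<in> v ` B"
    then obtain y where "y \<in> B" "t = v y" by auto
    then show "Inf (u ` B) - M \<le> t"
      using assms(2,4) cInf_lower[of "u y" "u ` B"] bdd unfolding B_def by fastforce
  qed (use assms(1) B_def in auto)
  ultimately show ?thesis unfolding S_op_def B_def by (simp add: field_simps)
qed

lemma M_op_diff:
  assumes "set_integrable \<mu> (ball x (r x)) u" "set_integrable \<mu> (ball x (r x)) v"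
  shows "M_op \<mu> r u x - M_op \<mu> r v x = M_op \<mu> r (\<lambda>y. u y - v y) x"
  using set_integral_diff(2)[OF assms] unfolding M_op_def by (simp add: diff_divide_distrib)

lemma T_op_fixed_points_diff_max_on_ball:
  fixes u v :: "'a::euclidean_space \<Rightarrow> real"
  assumes sets: "sets \<mu> = sets borel"
    and fin: "\<And>x e. emeasure \<mu> (ball x e) < \<infinity>"
    and pos: "\<And>x e. 0 < e \<Longrightarrow> 0 < emeasure \<mu> (ball x e)"
    and \<alpha>: "0 \<le> \<alpha>" "\<alpha> < 1"
    and K: "compact K" "continuous_on K u" "continuous_on K v"
    and r: "0 < r x" "ball x (r x) \<subseteq> K"
    and fu: "T_op \<alpha> \<mu> r u x = u x" and fv: "T_op \<alpha> \<mu> r v x = v x"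
    and max: "\<And>y. y \<in> K \<Longrightarrow> u y - v y \<le> u x - v x"
    and y: "y \<in> ball x (r x)"
  shows "u y - v y = u x - v x"
proof -
  define B where "B = ball x (r x)"
  define M where "M = u x - v x"
  define w where "w = (\<lambda>y. u y - v y)"
  have bounded: "bounded (f ` B)" if "continuous_on K f" for f :: "'a \<Rightarrow> real"
    using bounded_subset[OF compact_imp_bounded[OF compact_continuous_image[OF that K(1)]]] r(2)
    unfolding B_def by blast
  have cont: "continuous_on B f" if "continuous_on K f" for f :: "'a \<Rightarrow> real"
    using continuous_on_subset[OF that r(2)] unfolding B_def .
  have int: "set_integrable \<mu> B f" if "continuous_on K f" for f :: "'a \<Rightarrow> real"
    using set_integrable_bounded_continuous_on
        [OF sets _ fin[of x "r x", folded B_def] cont[OF that] bounded[OF that]]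
    unfolding B_def by simp
  have "S_op r u x - S_op r v x \<le> M"
    using S_op_diff_le[of x r u v M] bounded K r max unfolding B_def M_def by (auto simp: subset_iff)
  then have "\<alpha> * (S_op r u x - S_op r v x) \<le> \<alpha> * M" using \<alpha> by (simp add: mult_left_mono)
  moreover have "M_op \<mu> r u x - M_op \<mu> r v x = M_op \<mu> r w x"
    using M_op_diff[of \<mu> x r u v] int K unfolding B_def w_def by simp
  then have "M = \<alpha> * (S_op r u x - S_op r v x) + (1 - \<alpha>) * M_op \<mu> r w x"
    using fu fv unfolding M_def T_op_def by (simp add: algebra_simps)
  ultimately have "(1 - \<alpha>) * M \<le> (1 - \<alpha>) * M_op \<mu> r w x"
    unfolding left_diff_distrib right_diff_distrib by linarith
  then have "M \<le> (LINT y:B|\<mu>. w y) / measure \<mu> B"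
    using \<alpha> unfolding B_def M_op_def[symmetric] by simp
  moreover have "0 < measure \<mu> B"
    using pos[OF r(1), of x] fin[of x "r x"] emeasure_eq_ennreal_measure[of \<mu> B]
    unfolding B_def by (auto simp: less_top)
  ultimately have "M * measure \<mu> B \<le> (LINT y:B|\<mu>. w y)"
    by (simp add: pos_le_divide_eq)
  moreover have "continuous_on B w" "set_integrable \<mu> B w"
    using K cont int unfolding w_def by (auto intro: continuous_intros set_integral_diff(1))
  ultimately show ?thesis
    using continuous_eq_bound_if_set_integral_ge[OF sets _ _ pos, of B w M y] fin max r(2) y
    unfolding B_def M_def w_def by (auto simp: subset_iff)
qed

theorem proposition4p1:
  fixes \<mu> :: "'a::euclidean_space measure"
    and \<Omega> :: "'a set"
    and r :: "'a \<Rightarrow> real"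
    and \<alpha> :: real
    and u v :: "'a \<Rightarrow> real"
  assumes borel: "sets \<mu> = sets borel"
    and finite_balls: "\<And>x e. emeasure \<mu> (ball x e) < \<infinity>"
    and pos_balls: "\<And>x e. 0 < e \<Longrightarrow> 0 < emeasure \<mu> (ball x e)"
    and dom_open: "open \<Omega>" and dom_conn: "connected \<Omega>" and dom_ne: "\<Omega> \<noteq> {}"
    and dom_bdd: "bounded \<Omega>"
    and adm: "admissible_radius \<Omega> r"
    and \<alpha>: "0 \<le> \<alpha>" "\<alpha> < 1"
    and cu: "continuous_on (closure \<Omega>) u"
    and cv: "continuous_on (closure \<Omega>) v"
    and fu: "\<And>x. x \<in> \<Omega> \<Longrightarrow> T_op \<alpha> \<mu> r u x = u x"
    and fv: "\<And>x. x \<in> \<Omega> \<Longrightarrow> T_op \<alpha> \<mu> r v x = v x"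
    and bd: "\<And>x. x \<in> frontier \<Omega> \<Longrightarrow> u x \<le> v x"
  shows "\<forall>x\<in>\<Omega>. u x \<le> v x"
proof (rule ccontr)
  assume "\<not> (\<forall>x\<in>\<Omega>. u x \<le> v x)"
  then obtain x1 where x1: "x1 \<in> \<Omega>" "v x1 < u x1" by force
  define w where "w = (\<lambda>x. u x - v x)"
  have cw: "continuous_on (closure \<Omega>) w"
    unfolding w_def using cu cv by (intro continuous_intros)
  have cpt: "compact (closure \<Omega>)" using dom_bdd by (simp add: compact_closure)
  obtain x0 where x0: "x0 \<in> closure \<Omega>"
    and max: "\<And>y. y \<in> closure \<Omega> \<Longrightarrow> w y \<le> w x0"
    using continuous_attains_sup[OF cpt _ cw] dom_ne by auto
  have pos: "0 < w x0" using max[of x1] x1 closure_subset unfolding w_def by force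
  then have "x0 \<in> \<Omega>"
    using x0 bd dom_open unfolding w_def by (force simp: frontier_def interior_open)
  moreover have "openin (top_of_set \<Omega>) {x \<in> \<Omega>. w x = w x0}"
    unfolding openin_open_eq[OF dom_open] open_contains_ball
  proof (intro conjI ballI)
    fix x assume x: "x \<in> {x \<in> \<Omega>. w x = w x0}"
    have r: "0 < r x" "ball x (r x) \<subseteq> \<Omega>"
      using x adm ball_subset_if_le_infdist_frontier[of x \<Omega> "r x"]
      unfolding admissible_radius_def by auto
    then show "\<exists>e>0. ball x e \<subseteq> {x \<in> \<Omega>. w x = w x0}"
      using T_op_fixed_points_diff_max_on_ball[where r = r and x = x,
          OF borel finite_balls pos_balls \<alpha> cpt cu cv r(1) subset_trans[OF r(2) closure_subset]]
        x closure_subset fu fv max unfolding w_def by (intro exI[of _ "r x"]) fastforce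
  qed auto
  ultimately have "\<forall>x\<in>\<Omega>. w x = w x0"
    using continuous_levelset_openin[OF dom_conn continuous_on_subset[OF cw closure_subset]] by blast
  then have "\<forall>x\<in>closure \<Omega>. w x = w x0"
    using continuous_constant_on_closure[OF cw] by blast
  moreover obtain z where "z \<in> frontier \<Omega>"
    using dom_ne dom_bdd frontier_eq_empty not_bounded_UNIV by blast
  ultimately show False
    using bd pos unfolding w_def by (force simp: frontier_def)
qed

end
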